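(* Let $X$ be a topological space equipped with a continuous binary operation $*:X\times X\to X$ and a point $e\in X$ such that $x*e=x=e*x$ and $x*x=x$ for all $x\in X$ (a topological idempotent unitary magma). Then the fundamental group $\pi_1(X,e)$ is trivial. *)

theory Defs
  imports "HOL-Analysis.Analysis"
begin

definition trivial_fundamental_group :: "'a topology \<Rightarrow> 'a \<Rightarrow> bool" where
  "trivial_fundamental_group X a \<longleftrightarrow>
     (\<forall>g. pathin X g \<and> g 0 = a \<and> g 1 = a \<longrightarrow>
        homotopic_with (\<lambda>h. h 0 = a \<and> h 1 = a) (top_of_set {0..1}) X g (\<lambda>t. a))"

end

theory Submission
  imports Defs
begin

text \<open>Let \<open>g\<close> be a loop at \<open>e\<close> and put \<open>G(\<alpha>, \<beta>) = g \<alpha> * g \<beta>\<close> on the unit square. By the unit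
  laws \<open>G\<close> runs along \<open>g\<close> on the bottom edge \<open>\<beta> = 0\<close> and backwards along \<open>g\<close> on the right edge
  \<open>\<alpha> = 1\<close>; by idempotence it runs along \<open>g\<close> on the diagonal. The bottom edge and the diagonal
  followed by the right edge are paths in a convex set with the same end points, so composing a
  homotopy between them with \<open>G\<close> shows that \<open>g\<close> is homotopic to \<open>g\<close> followed by its reverse, which
  contracts along \<open>g\<close> itself.\<close>

lemma continuous_map_pathin_compose:
  assumes "pathin X g" "continuous_on S \<phi>" "\<phi> ` S \<subseteq> {0..1}"
  shows "continuous_map (top_of_set S) X (\<lambda>x. g (\<phi> x))"
proof -
  have "continuous_map (top_of_set S) (top_of_set {0..1}) \<phi>"
    using assms(2,3) by (simp add: continuous_map_in_subtopology image_subset_iff_funcset)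
  from continuous_map_compose[OF this assms(1)[unfolded pathin_def]] show ?thesis
    by (simp add: o_def)
qed

lemma homotopic_loopsI:
  fixes H :: "real \<times> real \<Rightarrow> 'a"
  assumes "continuous_map (top_of_set ({0..1} \<times> {0..1})) X H"
    and "\<And>t. t \<in> {0..1} \<Longrightarrow> H (0, t) = p t"
    and "\<And>t. t \<in> {0..1} \<Longrightarrow> H (1, t) = q t"
    and "\<And>s. s \<in> {0..1} \<Longrightarrow> H (s, 0) = a \<and> H (s, 1) = a"
  shows "homotopic_with (\<lambda>h. h 0 = a \<and> h 1 = a) (top_of_set {0..1}) X p q"
  using assms by (subst homotopic_with) (auto simp: prod_topology_subtopology_eu intro!: exI[where x=H])

text \<open>\<open>\<lambda>t. g (min (2 * t) (2 - 2 * t))\<close> is \<open>g\<close> followed by its reverse; the library's \<open>joinpaths\<close>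
  and \<open>reversepath\<close> are only available on types of class \<open>topological_space\<close>.\<close>

lemma homotopic_backtrack_const:
  assumes "pathin X g"
  shows "homotopic_with (\<lambda>h. h 0 = g 0 \<and> h 1 = g 0) (top_of_set {0..1}) X
           (\<lambda>t. g (min (2 * t) (2 - 2 * t))) (\<lambda>t. g 0)"
proof -
  define \<phi> :: "real \<times> real \<Rightarrow> real" where "\<phi> = (\<lambda>(s, t). (1 - s) * min (2 * t) (2 - 2 * t))"
  have "\<phi> ` ({0..1} \<times> {0..1}) \<subseteq> {0..1}"
    by (auto simp: \<phi>_def intro!: mult_le_one)
  moreover have "continuous_on ({0..1} \<times> {0..1}) \<phi>"
    unfolding \<phi>_def case_prod_unfold by (intro continuous_intros)
  ultimately have "continuous_map (top_of_set ({0..1} \<times> {0..1})) X (\<lambda>p. g (\<phi> p))"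
    by (blast intro: continuous_map_pathin_compose[OF assms])
  then show ?thesis
    by (rule homotopic_loopsI) (simp_all add: \<phi>_def)
qed

lemma homotopic_backtrack_idempotent_magma:
  assumes cont: "continuous_map (prod_topology X X) X (\<lambda>(x, y). m x y)"
    and unit_r: "\<And>x. x \<in> topspace X \<Longrightarrow> m x e = x"
    and unit_l: "\<And>x. x \<in> topspace X \<Longrightarrow> m e x = x"
    and idem: "\<And>x. x \<in> topspace X \<Longrightarrow> m x x = x"
    and g: "pathin X g" "g 0 = e" "g 1 = e"
  shows "homotopic_with (\<lambda>h. h 0 = e \<and> h 1 = e) (top_of_set {0..1}) X
           g (\<lambda>t. g (min (2 * t) (2 - 2 * t)))"
proof -
  \<comment> \<open>As \<open>s\<close> goes from 0 to 1, the path \<open>t \<mapsto> (\<alpha> (s, t), \<beta> (s, t))\<close> moves from the bottom edge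
     to the diagonal followed by the right edge.\<close>
  define \<alpha> :: "real \<times> real \<Rightarrow> real" where "\<alpha> = (\<lambda>(s, t). min 1 (min (2 * t) (t + s / 2)))"
  define \<beta> :: "real \<times> real \<Rightarrow> real" where "\<beta> = (\<lambda>(s, t). min s (min (2 * t) (2 - 2 * t)))"
  have gX: "g t \<in> topspace X" if "t \<in> {0..1}" for t
    using g(1) that by (auto simp: pathin_def continuous_map_def)
  have "\<alpha> ` ({0..1} \<times> {0..1}) \<subseteq> {0..1}" "\<beta> ` ({0..1} \<times> {0..1}) \<subseteq> {0..1}"
    by (auto simp: \<alpha>_def \<beta>_def)
  moreover have "continuous_on ({0..1} \<times> {0..1}) \<alpha>" "continuous_on ({0..1} \<times> {0..1}) \<beta>"
    unfolding \<alpha>_def \<beta>_def case_prod_unfold by (intro continuous_intros | simp)+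
  ultimately have "continuous_map (top_of_set ({0..1} \<times> {0..1})) X (\<lambda>p. g (\<alpha> p))"
       "continuous_map (top_of_set ({0..1} \<times> {0..1})) X (\<lambda>p. g (\<beta> p))"
    by (blast intro: continuous_map_pathin_compose[OF g(1)])+
  then have "continuous_map (top_of_set ({0..1} \<times> {0..1})) (prod_topology X X)
               (\<lambda>p. (g (\<alpha> p), g (\<beta> p)))"
    by (rule continuous_map_pairedI)
  from continuous_map_compose[OF this cont]
  have "continuous_map (top_of_set ({0..1} \<times> {0..1})) X (\<lambda>p. m (g (\<alpha> p)) (g (\<beta> p)))"
    by (simp add: o_def)
  then show ?thesis
  proof (rule homotopic_loopsI)
    fix t :: real assume t: "t \<in> {0..1}"
    have "\<alpha> (0, t) = t" "\<beta> (0, t) = 0"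
      using t by (auto simp: \<alpha>_def \<beta>_def)
    then show "m (g (\<alpha> (0, t))) (g (\<beta> (0, t))) = g t"
      using t unit_r gX g(2) by simp
    show "m (g (\<alpha> (1, t))) (g (\<beta> (1, t))) = g (min (2 * t) (2 - 2 * t))"
    proof (cases "t \<le> 1/2")
      case True
      then have "\<alpha> (1, t) = 2 * t" "\<beta> (1, t) = 2 * t"
        using t by (auto simp: \<alpha>_def \<beta>_def)
      then show ?thesis using True t idem gX by simp
    next
      case False
      then have "\<alpha> (1, t) = 1" "\<beta> (1, t) = 2 - 2 * t"
        using t by (auto simp: \<alpha>_def \<beta>_def)
      then show ?thesis using False t unit_l gX g(3) by simp
    qed
  next
    fix s :: real assume s: "s \<in> {0..1}"
    have "\<alpha> (s, 0) = 0" "\<beta> (s, 0) = 0" "\<alpha> (s, 1) = 1" "\<beta> (s, 1) = 0"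
      using s by (auto simp: \<alpha>_def \<beta>_def)
    then show "m (g (\<alpha> (s, 0))) (g (\<beta> (s, 0))) = e \<and> m (g (\<alpha> (s, 1))) (g (\<beta> (s, 1))) = e"
      using unit_r gX[of 0] g(2,3) by simp
  qed
qed

theorem corollary2p1:
  fixes X :: "'a topology" and m :: "'a \<Rightarrow> 'a \<Rightarrow> 'a" and e :: 'a
  assumes cont: "continuous_map (prod_topology X X) X (\<lambda>(x, y). m x y)"
    and e_in: "e \<in> topspace X"
    and unit_r: "\<And>x. x \<in> topspace X \<Longrightarrow> m x e = x"
    and unit_l: "\<And>x. x \<in> topspace X \<Longrightarrow> m e x = x"
    and idem: "\<And>x. x \<in> topspace X \<Longrightarrow> m x x = x"
  shows "trivial_fundamental_group X e"
  unfolding trivial_fundamental_group_def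
proof (intro allI impI)
  fix g assume g: "pathin X g \<and> g 0 = e \<and> g 1 = e"
  then have "homotopic_with (\<lambda>h. h 0 = e \<and> h 1 = e) (top_of_set {0..1}) X
               g (\<lambda>t. g (min (2 * t) (2 - 2 * t)))"
    using homotopic_backtrack_idempotent_magma[OF cont unit_r unit_l idem] by blast
  moreover have "homotopic_with (\<lambda>h. h 0 = e \<and> h 1 = e) (top_of_set {0..1}) X
                   (\<lambda>t. g (min (2 * t) (2 - 2 * t))) (\<lambda>t. e)"
    using homotopic_backtrack_const[of X g] g by simp
  ultimately show "homotopic_with (\<lambda>h. h 0 = e \<and> h 1 = e) (top_of_set {0..1}) X g (\<lambda>t. e)"
    by (rule homotopic_with_trans)
qed

end
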